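(* Let $J\subseteq S$. The poset $\mathrm{Weak}(\mathfrak{S}_n^J(231))$, i.e. the set $\mathfrak{S}_n^J(231)$ ordered by $u\le_S v\iff\mathrm{inv}(u)\subseteq\mathrm{inv}(v)$, is a lattice.
   Context: $\mathfrak{S}_n$ is the symmetric group on $[n]$, $s_i=(i,i+1)$, $S=\{s_1,\dots,s_{n-1}\}$, one-line notation $w=w_1\cdots w_n$, $\mathrm{inv}(w)=\{(i,j):i<j,\ w_i>w_j\}$. For $J\subseteq S$, $\mathfrak{S}_n^J$ is the set of $w$ with $w_i<w_{i+1}$ whenever $s_i\in J$. Writing $J=S\setminus\{s_{j_1},\dots,s_{j_r}\}$ with $j_1<\dots<j_r$, the $J$-regions are $\{1,\dots,j_1\},\{j_1+1,\dots,j_2\},\dots,\{j_r+1,\dots,n\}$. $\mathfrak{S}_n^J(231)$ is the set of $w\in\mathfrak{S}_n^J$ admitting no indices $i<j<k$ in pairwise different $J$-regions with $w_k<w_i<w_j$ and $w_i=w_k+1$. *)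

theory Defs
  imports "HOL-Combinatorics.Permutations"
begin

text \<open>Permutations of [n] are functions w :: nat => nat with w permutes {1..n};
  w i is the i-th letter in one-line notation. A subset J of S = {s_1,...,s_(n-1)}
  is represented by the set of indices i with s_i in J, a subset of {1..<n}.\<close>

definition inv_set :: "nat \<Rightarrow> (nat \<Rightarrow> nat) \<Rightarrow> (nat \<times> nat) set" where
  "inv_set n w = {(i, j). 1 \<le> i \<and> i < j \<and> j \<le> n \<and> w i > w j}"

definition parabolic_quotient :: "nat \<Rightarrow> nat set \<Rightarrow> (nat \<Rightarrow> nat) set" where
  "parabolic_quotient n J = {w. w permutes {1..n} \<and> (\<forall>i\<in>J. w i < w (Suc i))}"

definition same_region :: "nat set \<Rightarrow> nat \<Rightarrow> nat \<Rightarrow> bool" where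
  "same_region J p q = (\<forall>j. p \<le> j \<and> j < q \<longrightarrow> j \<in> J)"

definition avoids_J231 :: "nat \<Rightarrow> nat set \<Rightarrow> (nat \<Rightarrow> nat) \<Rightarrow> bool" where
  "avoids_J231 n J w = (\<not> (\<exists>i j k. 1 \<le> i \<and> i < j \<and> j < k \<and> k \<le> n \<and>
      \<not> same_region J i j \<and> \<not> same_region J j k \<and>
      w k < w i \<and> w i < w j \<and> w i = w k + 1))"

definition S_J_231 :: "nat \<Rightarrow> nat set \<Rightarrow> (nat \<Rightarrow> nat) set" where
  "S_J_231 n J = {w \<in> parabolic_quotient n J. avoids_J231 n J w}"

definition is_lub_in :: "('a \<Rightarrow> 'a \<Rightarrow> bool) \<Rightarrow> 'a set \<Rightarrow> 'a \<Rightarrow> 'a \<Rightarrow> 'a \<Rightarrow> bool" where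
  "is_lub_in le X x y z = (z \<in> X \<and> le x z \<and> le y z \<and>
      (\<forall>u\<in>X. le x u \<and> le y u \<longrightarrow> le z u))"

definition is_glb_in :: "('a \<Rightarrow> 'a \<Rightarrow> bool) \<Rightarrow> 'a set \<Rightarrow> 'a \<Rightarrow> 'a \<Rightarrow> 'a \<Rightarrow> bool" where
  "is_glb_in le X x y z = (z \<in> X \<and> le z x \<and> le z y \<and>
      (\<forall>u\<in>X. le u x \<and> le u y \<longrightarrow> le u z))"

definition is_lattice_on :: "('a \<Rightarrow> 'a \<Rightarrow> bool) \<Rightarrow> 'a set \<Rightarrow> bool" where
  "is_lattice_on le X = (\<forall>x\<in>X. \<forall>y\<in>X. (\<exists>z. is_lub_in le X x y z) \<and> (\<exists>z. is_glb_in le X x y z))"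

definition weak_le :: "nat \<Rightarrow> (nat \<Rightarrow> nat) \<Rightarrow> (nat \<Rightarrow> nat) \<Rightarrow> bool" where
  "weak_le n u v = (inv_set n u \<subseteq> inv_set n v)"

end

theory Submission
  imports Defs
begin

text \<open>
  Inversion sets of permutations of [n] are exactly the sets of pairs i < j that are
  transitive and co-transitive. Both properties survive the transitive closure of a
  union, so the join of u and v in the weak order on all permutations is the
  permutation z whose inversion set is the transitive closure of inv(u) \<union> inv(v).
  If z had a J-separated 231 pattern i < j < k with z i = z k + 1, then (i, k) admits
  no intermediate inversion of z, so it is already an inversion of u (say), and no
  position strictly between i and k carries a u-value between u k and u i. A maximality
  argument on the values of u then yields a forbidden pattern in u itself. Hence the
  subposet is closed under joins, and a finite join-semilattice with a least element
  (the identity) is a lattice.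
\<close>

lemma is_lattice_on_if_finite_lub_bot:
  assumes "finite X" and "b \<in> X" and b_least: "\<And>x. x \<in> X \<Longrightarrow> le b x"
    and refl: "\<And>x. x \<in> X \<Longrightarrow> le x x"
    and trans: "\<And>x y z. \<lbrakk>x \<in> X; y \<in> X; z \<in> X; le x y; le y z\<rbrakk> \<Longrightarrow> le x z"
    and lub: "\<And>x y. \<lbrakk>x \<in> X; y \<in> X\<rbrakk> \<Longrightarrow> \<exists>z. is_lub_in le X x y z"
  shows "is_lattice_on le X"
proof -
  have "\<exists>g. is_glb_in le X x y g" if "x \<in> X" "y \<in> X" for x y
  proof -
    define L where "L = {l \<in> X. le l x \<and> le l y}"
    define below where "below g = {l \<in> X. le l g}" for g
    have "b \<in> L"
      using \<open>b \<in> X\<close> b_least that by (simp add: L_def)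
    then have "finite (below ` L)" "below ` L \<noteq> {}"
      using \<open>finite X\<close> by (auto simp: L_def)
    then obtain g where "g \<in> L" and g_max: "\<And>l. l \<in> L \<Longrightarrow> below g \<subseteq> below l \<Longrightarrow> below g = below l"
      using finite_has_maximal[of "below ` L"] by blast
    have "le l g" if "l \<in> L" for l
    proof -
      obtain z where z: "is_lub_in le X g l z"
        using lub \<open>g \<in> L\<close> \<open>l \<in> L\<close> by (auto simp: L_def)
      then have "z \<in> L"
        using \<open>g \<in> L\<close> \<open>l \<in> L\<close> \<open>x \<in> X\<close> \<open>y \<in> X\<close> by (simp add: L_def is_lub_in_def)
      moreover have "below g \<subseteq> below z"
        using z trans \<open>g \<in> L\<close> by (auto simp: below_def is_lub_in_def L_def)
      ultimately have "z \<in> below g"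
        using g_max refl \<open>z \<in> L\<close> by (auto simp: below_def L_def)
      with z trans \<open>g \<in> L\<close> \<open>l \<in> L\<close> show "le l g"
        by (auto simp: below_def is_lub_in_def L_def)
    qed
    with \<open>g \<in> L\<close> show ?thesis
      by (auto simp: is_glb_in_def L_def)
  qed
  with lub show ?thesis
    unfolding is_lattice_on_def by blast
qed

lemma card_less_card_if_strict_order:
  assumes "finite A" "x \<in> A" "R x y"
    and irrefl: "\<And>a. \<not> R a a" and trans: "\<And>a b c. R a b \<Longrightarrow> R b c \<Longrightarrow> R a c"
  shows "card {a \<in> A. R a x} < card {a \<in> A. R a y}"
proof (rule psubset_card_mono)
  show "{a \<in> A. R a x} \<subset> {a \<in> A. R a y}"
    using assms by blast
qed (use \<open>finite A\<close> in simp)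

lemma ex_permutes_realizing_strict_linear_order:
  fixes R :: "nat \<Rightarrow> nat \<Rightarrow> bool"
  assumes irrefl: "\<And>i. \<not> R i i" and trans: "\<And>i j k. R i j \<Longrightarrow> R j k \<Longrightarrow> R i k"
    and total: "\<And>i j. i \<noteq> j \<Longrightarrow> R i j \<or> R j i"
  obtains w where "w permutes {1..n}" "\<And>i j. \<lbrakk>i \<in> {1..n}; j \<in> {1..n}\<rbrakk> \<Longrightarrow> w i < w j \<longleftrightarrow> R i j"
proof
  define w where "w i = (if i \<in> {1..n} then Suc (card {j \<in> {1..n}. R j i}) else i)" for i
  have mono: "w i < w j" if "i \<in> {1..n}" "j \<in> {1..n}" "R i j" for i j
    using card_less_card_if_strict_order[of "{1..n}" i R j] that irrefl trans
    by (simp add: w_def)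
  show "w i < w j \<longleftrightarrow> R i j" if "i \<in> {1..n}" "j \<in> {1..n}" for i j
    using mono[of i j] mono[of j i] total[of i j] that by (cases "i = j") auto
  have "w i \<in> {1..n}" if "i \<in> {1..n}" for i
  proof -
    have "card {j \<in> {1..n}. R j i} \<le> card ({1..n} - {i})"
      using irrefl by (intro card_mono) auto
    also have "\<dots> = n - 1"
      using that by simp
    finally show ?thesis
      using that by (auto simp: w_def)
  qed
  moreover have inj: "inj_on w {1..n}"
    using mono total by (metis inj_onI less_irrefl)
  ultimately have "w ` {1..n} = {1..n}"
    by (intro endo_inj_surj) auto
  with inj have "bij_betw w {1..n} {1..n}"
    by (simp add: bij_betw_def)
  then show "w permutes {1..n}"
    by (rule bij_imp_permutes) (auto simp: w_def)
qed

definition index_pairs :: "nat \<Rightarrow> (nat \<times> nat) set" where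
  "index_pairs n = {(i, j). 1 \<le> i \<and> i < j \<and> j \<le> n}"

definition cotrans :: "('a::linorder \<times> 'a) set \<Rightarrow> bool" where
  "cotrans T \<longleftrightarrow> (\<forall>i j k. i < j \<and> j < k \<and> (i, k) \<in> T \<longrightarrow> (i, j) \<in> T \<or> (j, k) \<in> T)"

lemma trans_index_pairs: "trans (index_pairs n)"
  by (auto simp: trans_def index_pairs_def)

lemma inv_set_subset_index_pairs: "inv_set n w \<subseteq> index_pairs n"
  by (auto simp: inv_set_def index_pairs_def)

lemma trans_inv_set: "trans (inv_set n w)"
  by (auto simp: trans_def inv_set_def)

lemma cotrans_inv_set: "cotrans (inv_set n w)"
  by (auto simp: cotrans_def inv_set_def)

lemma cotrans_Un: "cotrans A \<Longrightarrow> cotrans B \<Longrightarrow> cotrans (A \<union> B)"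
  unfolding cotrans_def by blast

lemma trancl_subset_trans: "A \<subseteq> B \<Longrightarrow> trans B \<Longrightarrow> A\<^sup>+ \<subseteq> B"
  using trancl_mono_subset[of A B] by simp

lemma cotrans_trancl:
  assumes cotr: "cotrans U"
  shows "cotrans (U\<^sup>+)"
proof -
  have "(i, j) \<in> U\<^sup>+ \<or> (j, k) \<in> U\<^sup>+" if "(i, k) \<in> U\<^sup>+" "i < j" "j < k" for i j k
    using that
  proof (induction arbitrary: j rule: trancl_induct)
    case (base k)
    then show ?case
      using cotr unfolding cotrans_def by blast
  next
    case (step y k)
    show ?case
    proof (cases j y rule: linorder_cases)
      case less
      with step.IH \<open>i < j\<close> \<open>(y, k) \<in> U\<close> show ?thesis
        by (meson trancl_into_trancl)
    next
      case equal
      with step.hyps show ?thesis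
        by simp
    next
      case greater
      with cotr \<open>(y, k) \<in> U\<close> \<open>j < k\<close> have "(y, j) \<in> U \<or> (j, k) \<in> U"
        unfolding cotrans_def by blast
      with \<open>(i, y) \<in> U\<^sup>+\<close> show ?thesis
        by (meson trancl_into_trancl r_into_trancl)
    qed
  qed
  then show ?thesis
    unfolding cotrans_def by blast
qed

text \<open>If T is the inversion set of w, then value_less T i j holds iff w i < w j.\<close>
definition value_less :: "('a::linorder \<times> 'a) set \<Rightarrow> 'a \<Rightarrow> 'a \<Rightarrow> bool" where
  "value_less T i j \<longleftrightarrow> (i < j \<and> (i, j) \<notin> T) \<or> (j < i \<and> (j, i) \<in> T)"

lemma value_less_trans:
  assumes "trans T" and "cotrans T" and "value_less T i j" "value_less T j k"
  shows "value_less T i k"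
proof -
  have t: "(a, c) \<in> T" if "(a, b) \<in> T" "(b, c) \<in> T" for a b c
    using \<open>trans T\<close> that by (rule transD)
  have c: "(a, b) \<in> T \<or> (b, c) \<in> T" if "a < b" "b < c" "(a, c) \<in> T" for a b c
    using \<open>cotrans T\<close> that unfolding cotrans_def by blast
  show ?thesis
    using assms(3,4) t c unfolding value_less_def
    by (cases i k rule: linorder_cases) (blast dest: less_trans)+
qed

lemma ex_permutes_inv_set_eq:
  assumes "T \<subseteq> index_pairs n" and "trans T" and "cotrans T"
  obtains w where "w permutes {1..n}" "inv_set n w = T"
proof -
  have irrefl: "\<not> value_less T i i" for i
    by (simp add: value_less_def)
  have trans: "value_less T i k" if "value_less T i j" "value_less T j k" for i j k
    using \<open>trans T\<close> \<open>cotrans T\<close> that by (rule value_less_trans)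
  have total: "value_less T i j \<or> value_less T j i" if "i \<noteq> j" for i j
    using that by (auto simp: value_less_def)
  obtain w where w: "w permutes {1..n}"
    and w_less: "\<And>i j. \<lbrakk>i \<in> {1..n}; j \<in> {1..n}\<rbrakk> \<Longrightarrow> w i < w j \<longleftrightarrow> value_less T i j"
    by (rule ex_permutes_realizing_strict_linear_order[where R = "value_less T"])
      (use irrefl trans total in blast)+
  have "inv_set n w = T"
    using assms(1) w_less by (auto simp: inv_set_def index_pairs_def value_less_def)
  with w that show ?thesis
    by blast
qed

lemma ex_permutes_inv_set_trancl_Un:
  obtains z where "z permutes {1..n}" "inv_set n z = (inv_set n u \<union> inv_set n v)\<^sup>+"
proof (rule ex_permutes_inv_set_eq)
  show "(inv_set n u \<union> inv_set n v)\<^sup>+ \<subseteq> index_pairs n"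
    using inv_set_subset_index_pairs trans_index_pairs by (intro trancl_subset_trans) blast+
  show "cotrans ((inv_set n u \<union> inv_set n v)\<^sup>+)"
    by (intro cotrans_trancl cotrans_Un cotrans_inv_set)
qed (rule trans_trancl)

lemma same_region_mono:
  "same_region J p q \<Longrightarrow> p \<le> p' \<Longrightarrow> q' \<le> q \<Longrightarrow> same_region J p' q'"
  by (auto simp: same_region_def)

lemma avoids_J231_obtains_between:
  assumes avoids: "avoids_J231 n J u" and perm: "u permutes {1..n}"
    and "1 \<le> i" "i < j" "j < k" "k \<le> n"
    and regions: "\<not> same_region J i j" "\<not> same_region J j k"
    and "u k < u i" "u i < u j"
  obtains m where "i < m" "m < k" "u k < u m" "u m < u i"
proof (rule ccontr)
  assume "\<not> thesis"
  with that have no_between: "\<not> (u k < u m \<and> u m < u i)" if "i < m" "m < k" for m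
    using \<open>i < m\<close> \<open>m < k\<close> by blast
  have inj: "u x = u y \<Longrightarrow> x = y" for x y
    using perm by (meson permutes_inj injD)
  define S where "S = {x \<in> u ` {k..n}. x < u i}"
  have "finite S" "u k \<in> S"
    using \<open>k \<le> n\<close> \<open>u k < u i\<close> by (auto simp: S_def)
  define b where "b = Max S"
  have "S \<noteq> {}"
    using \<open>u k \<in> S\<close> by blast
  with \<open>finite S\<close> have "b \<in> S"
    unfolding b_def by (rule Max_in)
  have b_max: "x \<le> b" if "x \<in> S" for x
    using \<open>finite S\<close> that unfolding b_def by (rule Max_ge)
  from \<open>b \<in> S\<close> obtain q where q: "k \<le> q" "q \<le> n" "u q = b" and "b < u i"
    by (auto simp: S_def)
  have "u k \<le> b"
    using \<open>u k \<in> S\<close> by (rule b_max)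
  have "i \<in> {1..n}"
    using \<open>1 \<le> i\<close> \<open>i < j\<close> \<open>j < k\<close> \<open>k \<le> n\<close> by simp
  then have "u i \<in> {1..n}"
    by (rule permutes_in_image[OF perm, THEN iffD2])
  with \<open>b < u i\<close> have "b + 1 \<in> {1..n}"
    by simp
  then obtain p where p: "p \<in> {1..n}" "u p = b + 1"
    using permutes_image[OF perm] by (metis imageE)
  \<comment> \<open>b + 1 occurs neither strictly between i and k (no value of u there lies in the gap)
    nor at or right of k (maximality of b), so it occurs weakly left of i.\<close>
  have "p \<le> i"
  proof (rule ccontr)
    assume "\<not> p \<le> i"
    have "u p \<le> u i"
      using p \<open>b < u i\<close> by simp
    moreover have "u p \<noteq> u i"
      using inj \<open>\<not> p \<le> i\<close> by blast
    ultimately have "u p < u i"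
      by simp
    show False
    proof (cases "k \<le> p")
      case True
      with p \<open>u p < u i\<close> have "b + 1 \<in> S"
        unfolding S_def by (auto intro!: image_eqI[of _ u p])
      then show False
        using b_max[of "b + 1"] by simp
    next
      case False
      with no_between[of p] \<open>\<not> p \<le> i\<close> \<open>u p < u i\<close> p \<open>u k \<le> b\<close> show False
        by simp
    qed
  qed
  then have "\<not> same_region J p j" "\<not> same_region J j q"
    using regions q same_region_mono by blast+
  moreover have "1 \<le> p" "p < j" "j < q" "u q < u p" "u p < u j" "u p = u q + 1"
    using p q \<open>p \<le> i\<close> \<open>i < j\<close> \<open>j < k\<close> \<open>b < u i\<close> \<open>u i < u j\<close> by auto
  ultimately show False
    using avoids \<open>q \<le> n\<close> unfolding avoids_J231_def by blast
qed

lemma parabolic_quotient_trancl_Un: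
  assumes J: "J \<subseteq> {1..<n}"
    and u: "u \<in> parabolic_quotient n J" and v: "v \<in> parabolic_quotient n J"
    and z: "z permutes {1..n}" and z_inv: "inv_set n z = (inv_set n u \<union> inv_set n v)\<^sup>+"
  shows "z \<in> parabolic_quotient n J"
proof -
  have "z i < z (Suc i)" if "i \<in> J" for i
  proof (rule ccontr)
    assume "\<not> z i < z (Suc i)"
    moreover have "z i \<noteq> z (Suc i)"
      using z by (metis permutes_inj injD n_not_Suc_n)
    ultimately have "(i, Suc i) \<in> inv_set n z"
      using J \<open>i \<in> J\<close> by (auto simp: inv_set_def)
    then have "(i, Suc i) \<in> (inv_set n u \<union> inv_set n v)\<^sup>+"
      using z_inv by simp
    then show False
    proof (rule tranclE)
      assume "(i, Suc i) \<in> inv_set n u \<union> inv_set n v"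
      with u v \<open>i \<in> J\<close> show False
        by (force simp: parabolic_quotient_def inv_set_def)
    next
      fix c
      assume "(i, c) \<in> (inv_set n u \<union> inv_set n v)\<^sup>+" "(c, Suc i) \<in> inv_set n u \<union> inv_set n v"
      then have "i < c" "c < Suc i"
        using z_inv by (auto simp: inv_set_def)
      then show False
        by simp
    qed
  qed
  with z show ?thesis
    by (simp add: parabolic_quotient_def)
qed

lemma avoids_J231_trancl_Un:
  assumes u: "u \<in> S_J_231 n J" and v: "v \<in> S_J_231 n J"
    and z_inv: "inv_set n z = (inv_set n u \<union> inv_set n v)\<^sup>+"
  shows "avoids_J231 n J z"
  unfolding avoids_J231_def
proof (intro notI, elim exE conjE)
  fix i j k
  assume "1 \<le> i" "i < j" "j < k" "k \<le> n"
    and regions: "\<not> same_region J i j" "\<not> same_region J j k"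
    and "z k < z i" "z i < z j" and adjacent: "z i = z k + 1"
  let ?U = "inv_set n u \<union> inv_set n v"
  have "(i, k) \<in> inv_set n z"
    using \<open>1 \<le> i\<close> \<open>i < j\<close> \<open>j < k\<close> \<open>k \<le> n\<close> \<open>z k < z i\<close> by (simp add: inv_set_def)
  then have "(i, k) \<in> ?U"
    unfolding z_inv
  proof (rule tranclE)
    fix c
    assume "(i, c) \<in> ?U\<^sup>+" "(c, k) \<in> ?U"
    then have "(i, c) \<in> inv_set n z" "(c, k) \<in> inv_set n z"
      unfolding z_inv by auto
    with adjacent show ?thesis
      by (simp add: inv_set_def)
  qed
  moreover have "inv_set n u \<subseteq> inv_set n z" "inv_set n v \<subseteq> inv_set n z"
    unfolding z_inv by auto
  ultimately obtain w where w: "w \<in> S_J_231 n J" "inv_set n w \<subseteq> inv_set n z"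
    and "(i, k) \<in> inv_set n w"
    using u v by blast
  then have perm: "w permutes {1..n}" and "avoids_J231 n J w" and "w k < w i"
    by (auto simp: S_J_231_def parabolic_quotient_def inv_set_def)
  have "(i, j) \<notin> inv_set n w"
    using w(2) \<open>z i < z j\<close> by (auto simp: inv_set_def)
  moreover have "w i \<noteq> w j"
    using perm \<open>i < j\<close> by (metis permutes_inj injD less_irrefl)
  ultimately have "w i < w j"
    using \<open>1 \<le> i\<close> \<open>i < j\<close> \<open>j < k\<close> \<open>k \<le> n\<close> by (auto simp: inv_set_def)
  then obtain m where "i < m" "m < k" "w k < w m" "w m < w i"
    using avoids_J231_obtains_between[OF \<open>avoids_J231 n J w\<close> perm] \<open>1 \<le> i\<close> \<open>i < j\<close> \<open>j < k\<close>
      \<open>k \<le> n\<close> regions \<open>w k < w i\<close> by blast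
  then have "(i, m) \<in> inv_set n w" "(m, k) \<in> inv_set n w"
    using \<open>1 \<le> i\<close> \<open>k \<le> n\<close> by (auto simp: inv_set_def)
  then have "(i, m) \<in> inv_set n z" "(m, k) \<in> inv_set n z"
    using w(2) by auto
  with adjacent show False
    by (auto simp: inv_set_def)
qed

lemma is_lub_in_S_J_231:
  assumes J: "J \<subseteq> {1..<n}" and u: "u \<in> S_J_231 n J" and v: "v \<in> S_J_231 n J"
    and z: "z permutes {1..n}" and z_inv: "inv_set n z = (inv_set n u \<union> inv_set n v)\<^sup>+"
  shows "is_lub_in (weak_le n) (S_J_231 n J) u v z"
  unfolding is_lub_in_def
proof (intro conjI ballI impI)
  show "z \<in> S_J_231 n J"
    using parabolic_quotient_trancl_Un[OF J _ _ z z_inv] avoids_J231_trancl_Un[OF u v z_inv] u v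
    by (simp add: S_J_231_def)
  show "weak_le n u z" "weak_le n v z"
    using z_inv by (auto simp: weak_le_def)
  show "weak_le n z w" if "weak_le n u w \<and> weak_le n v w" for w
    using that z_inv trancl_subset_trans[OF _ trans_inv_set] by (simp add: weak_le_def)
qed

theorem proposition3p10:
  fixes n :: nat and J :: "nat set"
  assumes "J \<subseteq> {1..<n}"
  shows "is_lattice_on (weak_le n) (S_J_231 n J)"
proof (rule is_lattice_on_if_finite_lub_bot)
  show "finite (S_J_231 n J)"
    by (rule finite_subset[OF _ finite_permutations[of "{1..n}"]])
      (auto simp: S_J_231_def parabolic_quotient_def)
  show "id \<in> S_J_231 n J"
    by (simp add: S_J_231_def parabolic_quotient_def avoids_J231_def permutes_id)
  show "weak_le n id x" for x
    by (auto simp: weak_le_def inv_set_def)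
  show "weak_le n x x" for x
    by (simp add: weak_le_def)
  show "weak_le n x z" if "weak_le n x y" "weak_le n y z" for x y z
    using that by (simp add: weak_le_def)
  show "\<exists>z. is_lub_in (weak_le n) (S_J_231 n J) u v z"
    if "u \<in> S_J_231 n J" "v \<in> S_J_231 n J" for u v
    using ex_permutes_inv_set_trancl_Un is_lub_in_S_J_231[OF assms that] by metis
qed

end
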